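(* Let $\alpha,\beta$ be sets, $z\in\beta$, $\mathit{seq}:\beta\times\alpha\to\beta$ and $\mathit{comb}:\beta\times\beta\to\beta$, written $x\oplus y$. Let $\Gamma=\{\mathrm{foldl}(\mathit{seq},z,L) : L \text{ a finite list over }\alpha\}$. If calls $\mathrm{aggregate}(z,\mathit{seq},\mathit{comb},\mathit{rdd})$ have deterministic outcomes, then: (1) $z$ is an identity of $\oplus$ on $\Gamma$; (2) $\oplus$ is closed on $\Gamma$ (i.e. $x\oplus y\in\Gamma$ for $x,y\in\Gamma$); (3) $\oplus$ is commutative on $\Gamma$; (4) $\oplus$ is associative on $\Gamma$.
   Context: Lists are finite; $\mathbin{+\!\!+}$ is concatenation. $\mathrm{foldl}(f,b,[\,])=b$, $\mathrm{foldl}(f,b,[x_1,\dots,x_n])=f(\cdots f(f(b,x_1),x_2)\cdots,x_n)$. An RDD is a list of lists. A partitioning is a function $P$ sending each list $L$ over $\alpha$ to an RDD obtained by splitting $L$ into consecutive (possibly empty) pieces $p_1,\dots,p_n$ with $p_1\mathbin{+\!\!+}\cdots\mathbin{+\!\!+}p_n=L$ and then arbitrarily permuting $[p_1,\dots,p_n]$. $\mathrm{aggregate}_{\mathrm{det}}(z,\mathit{seq},\mathit{comb},[q_1,\dots,q_m])=\mathrm{foldl}(\mathit{comb},z,[\mathrm{foldl}(\mathit{seq},z,q_1),\dots,\mathrm{foldl}(\mathit{seq},z,q_m)])$. Calls $\mathrm{aggregate}(z,\mathit{seq},\mathit{comb},\mathit{rdd})$ have deterministic outcomes if $\mathrm{aggregate}_{\mathrm{det}}(z,\mathit{seq},\mathit{comb},P(L))=\mathrm{foldl}(\mathit{seq},z,L)$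 for all lists $L$ over $\alpha$ and all partitionings $P$. *)

theory Defs
  imports Main "HOL-Library.Multiset"
begin

text \<open>An RDD is a list of lists.\<close>

definition is_partitioning :: "('a list \<Rightarrow> 'a list list) \<Rightarrow> bool" where
  "is_partitioning P \<longleftrightarrow> (\<forall>L. \<exists>ps. concat ps = L \<and> mset (P L) = mset ps)"

definition aggregate_det ::
  "'b \<Rightarrow> ('b \<Rightarrow> 'a \<Rightarrow> 'b) \<Rightarrow> ('b \<Rightarrow> 'b \<Rightarrow> 'b) \<Rightarrow> 'a list list \<Rightarrow> 'b" where
  "aggregate_det z seq comb qs = foldl comb z (map (foldl seq z) qs)"

definition aggregate_deterministic ::
  "'b \<Rightarrow> ('b \<Rightarrow> 'a \<Rightarrow> 'b) \<Rightarrow> ('b \<Rightarrow> 'b \<Rightarrow> 'b) \<Rightarrow> bool" where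
  "aggregate_deterministic z seq comb \<longleftrightarrow>
     (\<forall>(P :: 'a list \<Rightarrow> 'a list list) L. is_partitioning P \<longrightarrow>
        aggregate_det z seq comb (P L) = foldl seq z L)"

end

theory Submission
  imports Defs
begin

text \<open>Any split of a list into pieces, listed in any order, is the value of some partitioning,
so determinism says that combining the seq-folds of any permutation of the pieces of a list gives
the seq-fold of the whole list. The pieces \<open>[A]\<close>, \<open>[A, []]\<close> and \<open>[A, B]\<close> show that \<open>z\<close> is
neutral and that \<open>foldl seq z\<close> turns \<open>@\<close> into \<open>comb\<close>; the pieces \<open>[B, A]\<close> of \<open>A @ B\<close> show
that the fold of \<open>A @ B\<close> equals that of \<open>B @ A\<close>. Closure, commutativity and associativity of
\<open>comb\<close> on folds are then inherited from \<open>@\<close>.\<close>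

lemma aggregate_deterministic_mset_eq:
  assumes "aggregate_deterministic z seq comb" and "mset qs = mset ps"
  shows "foldl comb z (map (foldl seq z) qs) = foldl seq z (concat ps)"
proof -
  define P where "P = (\<lambda>L. if L = concat ps then qs else [L])"
  have "is_partitioning P"
    unfolding is_partitioning_def P_def
  proof
    fix L
    show "\<exists>ps'. concat ps' = L \<and> mset (if L = concat ps then qs else [L]) = mset ps'"
      using assms(2) by (cases "L = concat ps") (auto intro: exI[of _ "[L]"] exI[of _ ps])
  qed
  then have "aggregate_det z seq comb (P (concat ps)) = foldl seq z (concat ps)"
    using assms(1) unfolding aggregate_deterministic_def by blast
  then show ?thesis by (simp add: P_def aggregate_det_def)
qed

context
  fixes z :: 'b and seq :: "'b \<Rightarrow> 'a \<Rightarrow> 'b" and comb :: "'b \<Rightarrow> 'b \<Rightarrow> 'b"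
  assumes deterministic: "aggregate_deterministic z seq comb"
begin

lemma aggregate_deterministic_comb_left_neutral:
  "comb z (foldl seq z A) = foldl seq z A"
  using aggregate_deterministic_mset_eq[OF deterministic, of "[A]" "[A]"] by simp

lemma aggregate_deterministic_comb_right_neutral:
  "comb (foldl seq z A) z = foldl seq z A"
  using aggregate_deterministic_mset_eq[OF deterministic, of "[A, []]" "[A, []]"]
  by (simp add: aggregate_deterministic_comb_left_neutral)

lemma aggregate_deterministic_comb_foldl_append:
  "comb (foldl seq z A) (foldl seq z B) = foldl seq z (A @ B)"
  using aggregate_deterministic_mset_eq[OF deterministic, of "[A, B]" "[A, B]"]
  by (simp add: aggregate_deterministic_comb_left_neutral)

lemma aggregate_deterministic_foldl_append_commute:
  "foldl seq z (A @ B) = foldl seq z (B @ A)"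
  using aggregate_deterministic_mset_eq[OF deterministic, of "[A, B]" "[B, A]"]
  by (simp add: aggregate_deterministic_comb_left_neutral aggregate_deterministic_comb_foldl_append
      add_mset_commute del: foldl_append)

end

theorem lemma5:
  fixes z :: 'b and seq :: "'b \<Rightarrow> 'a \<Rightarrow> 'b" and comb :: "'b \<Rightarrow> 'b \<Rightarrow> 'b"
  assumes "aggregate_deterministic z seq comb"
  shows "(\<forall>x \<in> {foldl seq z L | L. True}. comb z x = x \<and> comb x z = x)
       \<and> (\<forall>x \<in> {foldl seq z L | L. True}. \<forall>y \<in> {foldl seq z L | L. True}.
            comb x y \<in> {foldl seq z L | L. True})
       \<and> (\<forall>x \<in> {foldl seq z L | L. True}. \<forall>y \<in> {foldl seq z L | L. True}.
            comb x y = comb y x)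
       \<and> (\<forall>x \<in> {foldl seq z L | L. True}. \<forall>y \<in> {foldl seq z L | L. True}.
            \<forall>w \<in> {foldl seq z L | L. True}. comb (comb x y) w = comb x (comb y w))"
  by (auto simp: aggregate_deterministic_comb_left_neutral[OF assms]
      aggregate_deterministic_comb_right_neutral[OF assms]
      aggregate_deterministic_comb_foldl_append[OF assms]
      aggregate_deterministic_foldl_append_commute[OF assms]
      simp del: foldl_append)

end
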